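(* Let $v_1,\dots,v_m\in\mathbb{C}^d$ with $m$ even, $\sum_{i=1}^m v_iv_i^*=\mathbb{I}$, $\|v_i\|^2=\alpha$ for all $i$, and $\alpha\le\frac{1}{221d}$. Run Algorithm 1 (described in the context) and fix an iteration $0\le j<m/2$. Suppose that for every $0\le j'\le j$ we have $u_{j'}-\lambda_{\max}(A_{j'})\ge 1/3$ and $\kappa(u_{j'}\mathbb{I}-A_{j'})\le 3/2$. Write $A=A_j$, $\mathcal{B}=\mathcal{B}_j$, $\widehat u=u_{j+1}$. Then \[ \sum_{v\in\mathcal{B}}\log\Big(1-v^*(\widehat u\mathbb{I}-A)^{-1}v\Big)\ge\frac1\alpha\cdot\mathrm{tr}\Big[(\mathbb{I}-A)\cdot\log\big(\mathbb{I}-\alpha(\widehat u\mathbb{I}-A)^{-1}\big)\Big]. \]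
   Context: $\log$ of a positive definite matrix denotes the matrix logarithm. Algorithm 1: set $A_0=\mathbf{0}_{d\times d}$, $\mathcal{A}_0=\emptyset$, $\mathcal{B}_0=\{v_1,\dots,v_m\}$, $u_0=1/2$, $\delta_u=\alpha/d$. For $j=0,\dots,m/2-1$: set $u_{j+1}=u_j+\delta_u$; choose $v_j\in\mathcal{B}_j$ maximising $\det(u_{j+1}\mathbb{I}-A_j-vv^* )$ over $v\in\mathcal{B}_j$ (ties arbitrary); set $A_{j+1}=A_j+v_jv_j^*$, $\mathcal{A}_{j+1}=\mathcal{A}_j\cup\{v_j\}$, $\mathcal{B}_{j+1}=\mathcal{B}_j\setminus\{v_j\}$. $\kappa(B)=\lambda_{\max}(B)/\lambda_{\min}(B)$ for Hermitian positive definite $B$. *)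

theory Defs
  imports "Jordan_Normal_Form.Jordan_Normal_Form" "Jordan_Normal_Form.Spectral_Radius"
begin

definition gram_sum :: "nat \<Rightarrow> (nat \<Rightarrow> complex vec) \<Rightarrow> nat set \<Rightarrow> complex mat" where
  "gram_sum d v S = mat d d (\<lambda>(r, c). \<Sum>i\<in>S. v i $ r * cnj (v i $ c))"

definition outer :: "complex vec \<Rightarrow> complex mat" where
  "outer v = mat (dim_vec v) (dim_vec v) (\<lambda>(r, c). v $ r * cnj (v $ c))"

definition mtrace :: "complex mat \<Rightarrow> complex" where
  "mtrace A = (\<Sum>i<dim_row A. A $$ (i, i))"

definition unitary_mat :: "nat \<Rightarrow> complex mat \<Rightarrow> bool" where
  "unitary_mat n U \<longleftrightarrow> U \<in> carrier_mat n n \<and> mat_adjoint U * U = 1\<^sub>m n"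

definition lambda_max :: "complex mat \<Rightarrow> real" where
  "lambda_max A = Max {r. eigenvalue A (complex_of_real r)}"

definition lambda_min :: "complex mat \<Rightarrow> real" where
  "lambda_min A = Min {r. eigenvalue A (complex_of_real r)}"

definition cond_num :: "complex mat \<Rightarrow> real" where
  "cond_num B = lambda_max B / lambda_min B"

definition minv :: "complex mat \<Rightarrow> complex mat" where
  "minv M = the (mat_inverse M)"

definition mat_log :: "complex mat \<Rightarrow> complex mat" where
  "mat_log B = (THE L. \<exists>U (lam :: nat \<Rightarrow> real).
      unitary_mat (dim_row B) U \<and> (\<forall>i<dim_row B. lam i > 0) \<and>
      B = U * mat_diag (dim_row B) (\<lambda>i. complex_of_real (lam i)) * mat_adjoint U \<and>
      L = U * mat_diag (dim_row B) (\<lambda>i. complex_of_real (ln (lam i))) * mat_adjoint U)"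

(* Algorithm 1, with the vectors indexed by {0..<m} and sel j the index chosen at step j *)
definition u_seq :: "nat \<Rightarrow> real \<Rightarrow> nat \<Rightarrow> real" where
  "u_seq d \<alpha> j = 1/2 + real j * (\<alpha> / real d)"

definition A_seq :: "nat \<Rightarrow> (nat \<Rightarrow> complex vec) \<Rightarrow> (nat \<Rightarrow> nat) \<Rightarrow> nat \<Rightarrow> complex mat" where
  "A_seq d v sel j = gram_sum d v (sel ` {..<j})"

definition B_seq :: "nat \<Rightarrow> (nat \<Rightarrow> nat) \<Rightarrow> nat \<Rightarrow> nat set" where
  "B_seq m sel j = {..<m} - sel ` {..<j}"

(* sel is a valid run of Algorithm 1 (ties broken arbitrarily) *)
definition alg1_run :: "nat \<Rightarrow> nat \<Rightarrow> real \<Rightarrow> (nat \<Rightarrow> complex vec) \<Rightarrow> (nat \<Rightarrow> nat) \<Rightarrow> bool" where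
  "alg1_run d m \<alpha> v sel \<longleftrightarrow>
     (\<forall>j < m div 2. sel j \<in> B_seq m sel j \<and>
        (\<forall>w \<in> B_seq m sel j.
           Re (det (complex_of_real (u_seq d \<alpha> (Suc j)) \<cdot>\<^sub>m 1\<^sub>m d - A_seq d v sel j - outer (v w)))
           \<le> Re (det (complex_of_real (u_seq d \<alpha> (Suc j)) \<cdot>\<^sub>m 1\<^sub>m d - A_seq d v sel j - outer (v (sel j))))))"

end

theory Submission
  imports Defs "HOL-Analysis.Convex"
begin

(* Diagonalise the Hermitian matrix A = A_j in an orthonormal eigenbasis w_k with eigenvalues a_k.
   The spectral gap at step j gives u - a_k > alpha for u = u_(j+1), so (u I - A)^-1 and
   log (I - alpha (u I - A)^-1) are the functions r_k = 1 / (u - a_k) and ln (1 - alpha r_k) of A.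
   Since I - A is the sum of v v^* over the remaining vectors v, the trace is the sum of
   v^* log (I - alpha (u I - A)^-1) v, and for each v the numbers |v^* w_k|^2 / alpha are
   probability weights; Jensen's inequality for ln then bounds (1 / alpha) v^* log (...) v by
   ln (1 - v^* (u I - A)^-1 v). *)

lemma cscalar_prod_sum:
  "x \<in> carrier_vec n \<Longrightarrow> y \<in> carrier_vec n \<Longrightarrow> x \<bullet>c y = (\<Sum>i<n. x $ i * cnj (y $ i))"
  by (auto simp: scalar_prod_def lessThan_atLeast0)

lemma cscalar_prod_cnj:
  "x \<in> carrier_vec n \<Longrightarrow> y \<in> carrier_vec n \<Longrightarrow> cnj (x \<bullet>c y) = y \<bullet>c x"
  by (simp add: cscalar_prod_sum mult.commute)

lemma cscalar_prod_smult:
  "x \<in> carrier_vec n \<Longrightarrow> y \<in> carrier_vec n \<Longrightarrow> (a \<cdot>\<^sub>v x) \<bullet>c (b \<cdot>\<^sub>v y) = a * cnj b * (x \<bullet>c y)"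
  by (simp add: conjugate_smult_vec)

lemma mult_mat_vec_sum:
  "A \<in> carrier_mat n k \<Longrightarrow> x \<in> carrier_vec k \<Longrightarrow> i < n \<Longrightarrow> (A *\<^sub>v x) $ i = (\<Sum>j<k. A $$ (i, j) * x $ j)"
  by (auto simp: scalar_prod_def lessThan_atLeast0 row_def)

lemma index_mat_adjoint [simp]:
  fixes U :: "complex mat"
  shows "i < dim_col U \<Longrightarrow> j < dim_row U \<Longrightarrow> mat_adjoint U $$ (i, j) = cnj (U $$ (j, i))"
    "dim_row (mat_adjoint U) = dim_col U" "dim_col (mat_adjoint U) = dim_row U"
  by (auto simp: mat_adjoint_def mat_of_rows_def)

lemma mat_adjoint_carrier [simp]: "(U :: complex mat) \<in> carrier_mat n k \<Longrightarrow> mat_adjoint U \<in> carrier_mat k n"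
  unfolding carrier_mat_def by simp

definition hermitian_mat :: "nat \<Rightarrow> complex mat \<Rightarrow> bool" where
  "hermitian_mat n A \<longleftrightarrow> A \<in> carrier_mat n n \<and> (\<forall>i<n. \<forall>j<n. A $$ (i, j) = cnj (A $$ (j, i)))"

lemma hermitian_matD:
  "hermitian_mat n A \<Longrightarrow> A \<in> carrier_mat n n"
  "hermitian_mat n A \<Longrightarrow> i < n \<Longrightarrow> j < n \<Longrightarrow> A $$ (i, j) = cnj (A $$ (j, i))"
  unfolding hermitian_mat_def by blast+

lemma hermitian_mat_cscalar_prod:
  assumes A: "hermitian_mat n A" and x: "x \<in> carrier_vec n" and y: "y \<in> carrier_vec n"
  shows "(A *\<^sub>v x) \<bullet>c y = x \<bullet>c (A *\<^sub>v y)"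
proof -
  note Ac = hermitian_matD(1)[OF A]
  have "(A *\<^sub>v x) \<bullet>c y = (\<Sum>i<n. (\<Sum>j<n. A $$ (i, j) * x $ j) * cnj (y $ i))"
    using Ac x y by (simp add: cscalar_prod_sum[of _ n] mult_mat_vec_sum[OF Ac x] del: index_mult_mat_vec)
  also have "\<dots> = (\<Sum>i<n. \<Sum>j<n. x $ j * (A $$ (i, j) * cnj (y $ i)))"
    by (simp add: sum_distrib_left sum_distrib_right mult_ac)
  also have "\<dots> = (\<Sum>j<n. \<Sum>i<n. x $ j * (A $$ (i, j) * cnj (y $ i)))"
    by (rule sum.swap)
  also have "\<dots> = (\<Sum>j<n. \<Sum>i<n. x $ j * cnj (A $$ (j, i) * y $ i))"
  proof (intro sum.cong refl)
    fix i j assume "i \<in> {..<n}" "j \<in> {..<n}"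
    then have "A $$ (i, j) = cnj (A $$ (j, i))" using hermitian_matD(2)[OF A] by blast
    then show "x $ j * (A $$ (i, j) * cnj (y $ i)) = x $ j * cnj (A $$ (j, i) * y $ i)" by simp
  qed
  also have "\<dots> = x \<bullet>c (A *\<^sub>v y)"
    using Ac x y
    by (simp add: cscalar_prod_sum[of _ n] mult_mat_vec_sum[OF Ac y] cnj_sum sum_distrib_left del: index_mult_mat_vec)
  finally show ?thesis .
qed

definition orthonormal :: "nat \<Rightarrow> complex vec list \<Rightarrow> bool" where
  "orthonormal n ws \<longleftrightarrow> set ws \<subseteq> carrier_vec n \<and>
     (\<forall>i<length ws. \<forall>j<length ws. ws ! i \<bullet>c ws ! j = (if i = j then 1 else 0))"

lemma orthonormalD:
  assumes "orthonormal n ws"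
  shows "\<And>k. k < length ws \<Longrightarrow> ws ! k \<in> carrier_vec n"
    and "\<And>i j. i < length ws \<Longrightarrow> j < length ws \<Longrightarrow> ws ! i \<bullet>c ws ! j = (if i = j then 1 else 0)"
  using assms by (auto simp: orthonormal_def)

lemma orthonormal_carrier: "orthonormal n ws \<Longrightarrow> set ws \<subseteq> carrier_vec n"
  unfolding orthonormal_def by (rule conjunct1)

lemma orthonormal_Cons:
  "orthonormal n (v # ws) \<longleftrightarrow>
     orthonormal n ws \<and> v \<in> carrier_vec n \<and> v \<bullet>c v = 1 \<and> (\<forall>w\<in>set ws. w \<bullet>c v = 0)"
proof
  assume on: "orthonormal n (v # ws)"
  have "orthonormal n ws"
    unfolding orthonormal_def
  proof (intro conjI allI impI)
    show "set ws \<subseteq> carrier_vec n" using orthonormal_carrier[OF on] by simp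
    fix i j assume "i < length ws" "j < length ws"
    then show "ws ! i \<bullet>c ws ! j = (if i = j then 1 else 0)"
      using orthonormalD(2)[OF on, of "Suc i" "Suc j"] by simp
  qed
  moreover have "w \<bullet>c v = 0" if "w \<in> set ws" for w
  proof -
    obtain k where "k < length ws" "w = ws ! k" using \<open>w \<in> set ws\<close> by (auto simp: in_set_conv_nth)
    then show ?thesis using orthonormalD(2)[OF on, of "Suc k" 0] by simp
  qed
  moreover have "v \<in> carrier_vec n" using orthonormalD(1)[OF on, of 0] by simp
  moreover have "v \<bullet>c v = 1" using orthonormalD(2)[OF on, of 0 0] by simp
  ultimately show "orthonormal n ws \<and> v \<in> carrier_vec n \<and> v \<bullet>c v = 1 \<and> (\<forall>w\<in>set ws. w \<bullet>c v = 0)"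
    by blast
next
  assume "orthonormal n ws \<and> v \<in> carrier_vec n \<and> v \<bullet>c v = 1 \<and> (\<forall>w\<in>set ws. w \<bullet>c v = 0)"
  then have on: "orthonormal n ws" and v: "v \<in> carrier_vec n" and vv: "v \<bullet>c v = 1"
    and orth: "\<And>k. k < length ws \<Longrightarrow> ws ! k \<bullet>c v = 0" by auto
  have orth': "v \<bullet>c ws ! k = 0" if "k < length ws" for k
    using cscalar_prod_cnj[OF orthonormalD(1)[OF on that] v] orth[OF that] by simp
  show "orthonormal n (v # ws)"
    unfolding orthonormal_def
  proof (intro conjI allI impI)
    show "set (v # ws) \<subseteq> carrier_vec n" using orthonormal_carrier[OF on] v by simp
    fix i j assume "i < length (v # ws)" "j < length (v # ws)"
    then show "(v # ws) ! i \<bullet>c (v # ws) ! j = (if i = j then 1 else 0)"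
      using vv orth orth' orthonormalD(2)[OF on] by (cases i; cases j) simp_all
  qed
qed

definition lincomb_vec :: "nat \<Rightarrow> complex vec list \<Rightarrow> (nat \<Rightarrow> complex) \<Rightarrow> complex vec" where
  "lincomb_vec n ws c = vec n (\<lambda>r. \<Sum>k<length ws. c k * ws ! k $ r)"

lemma lincomb_vec_carrier [simp]: "lincomb_vec n ws c \<in> carrier_vec n"
  by (simp add: lincomb_vec_def)

lemma dim_lincomb_vec [simp]: "dim_vec (lincomb_vec n ws c) = n"
  by (simp add: lincomb_vec_def)

lemma index_lincomb_vec: "r < n \<Longrightarrow> lincomb_vec n ws c $ r = (\<Sum>k<length ws. c k * ws ! k $ r)"
  by (simp add: lincomb_vec_def)

lemma lincomb_vec_cong:
  "(\<And>k. k < length ws \<Longrightarrow> c k = c' k) \<Longrightarrow> lincomb_vec n ws c = lincomb_vec n ws c'"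
  by (auto simp: lincomb_vec_def intro!: eq_vecI sum.cong)

lemma lincomb_vec_smult: "lincomb_vec n ws (\<lambda>k. a * c k) = a \<cdot>\<^sub>v lincomb_vec n ws c"
  by (auto simp: lincomb_vec_def sum_distrib_left mult_ac intro!: eq_vecI)

lemma lincomb_vec_cscalar_prod:
  assumes ws: "set ws \<subseteq> carrier_vec n" and y: "y \<in> carrier_vec n"
  shows "lincomb_vec n ws c \<bullet>c y = (\<Sum>k<length ws. c k * (ws ! k \<bullet>c y))"
proof -
  have "lincomb_vec n ws c \<bullet>c y = (\<Sum>r<n. \<Sum>k<length ws. c k * (ws ! k $ r * cnj (y $ r)))"
    using y by (simp add: cscalar_prod_sum[of _ n] index_lincomb_vec sum_distrib_left sum_distrib_right mult_ac)
  also have "\<dots> = (\<Sum>k<length ws. c k * (\<Sum>r<n. ws ! k $ r * cnj (y $ r)))"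
    by (subst sum.swap) (simp add: sum_distrib_left)
  also have "\<dots> = (\<Sum>k<length ws. c k * (ws ! k \<bullet>c y))"
    using subsetD[OF ws nth_mem] y by (intro sum.cong refl) (simp add: cscalar_prod_sum[of _ n])
  finally show ?thesis .
qed

lemma orthonormal_lincomb_cscalar_prod:
  assumes on: "orthonormal n ws" and j: "j < length ws"
  shows "lincomb_vec n ws c \<bullet>c ws ! j = c j"
proof -
  have "lincomb_vec n ws c \<bullet>c ws ! j = (\<Sum>k<length ws. c k * (if k = j then 1 else 0))"
    using lincomb_vec_cscalar_prod[OF orthonormal_carrier[OF on] orthonormalD(1)[OF on j]]
      orthonormalD(2)[OF on _ j] by simp
  also have "\<dots> = c j" using j by (simp add: if_distrib cong: if_cong)
  finally show ?thesis .
qed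

lemma orthonormal_lincomb_cscalar_lincomb:
  assumes on: "orthonormal n ws"
  shows "lincomb_vec n ws c \<bullet>c lincomb_vec n ws c' = (\<Sum>k<length ws. c k * cnj (c' k))"
proof -
  have "lincomb_vec n ws c \<bullet>c lincomb_vec n ws c' = (\<Sum>k<length ws. c k * (ws ! k \<bullet>c lincomb_vec n ws c'))"
    by (rule lincomb_vec_cscalar_prod[OF orthonormal_carrier[OF on] lincomb_vec_carrier])
  also have "\<dots> = (\<Sum>k<length ws. c k * cnj (c' k))"
  proof (intro sum.cong refl)
    fix k assume "k \<in> {..<length ws}"
    then have "ws ! k \<bullet>c lincomb_vec n ws c' = cnj (c' k)"
      using cscalar_prod_cnj[OF lincomb_vec_carrier orthonormalD(1)[OF on]]
        orthonormal_lincomb_cscalar_prod[OF on] by (metis lessThan_iff)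
    then show "c k * (ws ! k \<bullet>c lincomb_vec n ws c') = c k * cnj (c' k)" by simp
  qed
  finally show ?thesis .
qed

lemma orthonormal_unitary:
  assumes on: "orthonormal n ws" and len: "length ws = n"
  shows "unitary_mat n (mat_of_cols n ws)" "mat_of_cols n ws * mat_adjoint (mat_of_cols n ws) = 1\<^sub>m n"
proof -
  let ?U = "mat_of_cols n ws"
  have U: "?U \<in> carrier_mat n n" using len by auto
  have UU: "mat_adjoint ?U * ?U = 1\<^sub>m n"
  proof (rule eq_matI)
    fix i j assume "i < dim_row (1\<^sub>m n)" "j < dim_col (1\<^sub>m n)"
    then have i: "i < n" and j: "j < n" by auto
    have "(mat_adjoint ?U * ?U) $$ (i, j) = (\<Sum>r<n. ws ! j $ r * cnj (ws ! i $ r))"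
      using i j U len
      by (simp add: scalar_prod_def lessThan_atLeast0 row_def col_def mat_of_cols_index mult.commute)
    also have "\<dots> = ws ! j \<bullet>c ws ! i"
      using i j len by (simp add: cscalar_prod_sum[OF orthonormalD(1)[OF on] orthonormalD(1)[OF on]])
    also have "\<dots> = 1\<^sub>m n $$ (i, j)" using orthonormalD(2)[OF on] i j len by auto
    finally show "(mat_adjoint ?U * ?U) $$ (i, j) = 1\<^sub>m n $$ (i, j)" .
  qed (use U in auto)
  then show "unitary_mat n ?U" using U by (simp add: unitary_mat_def)
  show "?U * mat_adjoint ?U = 1\<^sub>m n"
    by (rule mat_mult_left_right_inverse[OF _ U UU]) (use U in simp)
qed

lemma orthonormal_expansion:
  assumes on: "orthonormal n ws" and len: "length ws = n" and x: "x \<in> carrier_vec n"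
  shows "x = lincomb_vec n ws (\<lambda>k. x \<bullet>c ws ! k)"
proof -
  let ?U = "mat_of_cols n ws"
  have U: "?U \<in> carrier_mat n n" using len by auto
  have "x = (?U * mat_adjoint ?U) *\<^sub>v x" using orthonormal_unitary(2)[OF on len] x by simp
  also have "\<dots> = ?U *\<^sub>v (mat_adjoint ?U *\<^sub>v x)" using U x by (simp add: assoc_mult_mat_vec[of _ n n _ n])
  also have "\<dots> = lincomb_vec n ws (\<lambda>k. x \<bullet>c ws ! k)"
  proof (rule eq_vecI)
    fix r assume "r < dim_vec (lincomb_vec n ws (\<lambda>k. x \<bullet>c ws ! k))"
    then have r: "r < n" by simp
    have "(?U *\<^sub>v (mat_adjoint ?U *\<^sub>v x)) $ r = (\<Sum>k<n. ws ! k $ r * (\<Sum>c<n. cnj (ws ! k $ c) * x $ c))"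
      using r U x len by (simp add: scalar_prod_def lessThan_atLeast0 row_def col_def mat_of_cols_index)
    also have "\<dots> = (\<Sum>k<n. (x \<bullet>c ws ! k) * ws ! k $ r)"
    proof (intro sum.cong refl)
      fix k assume "k \<in> {..<n}"
      then show "ws ! k $ r * (\<Sum>c<n. cnj (ws ! k $ c) * x $ c) = (x \<bullet>c ws ! k) * ws ! k $ r"
        using x orthonormalD(1)[OF on, of k] len
        by (simp add: cscalar_prod_sum[of _ n] sum_distrib_left mult_ac)
    qed
    also have "\<dots> = lincomb_vec n ws (\<lambda>k. x \<bullet>c ws ! k) $ r"
      using r len by (simp add: index_lincomb_vec)
    finally show "(?U *\<^sub>v (mat_adjoint ?U *\<^sub>v x)) $ r = lincomb_vec n ws (\<lambda>k. x \<bullet>c ws ! k) $ r" .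
  qed (use U in simp)
  finally show ?thesis .
qed

lemma orthonormal_basis_eqI:
  assumes on: "orthonormal n ws" and len: "length ws = n"
    and x: "x \<in> carrier_vec n" and y: "y \<in> carrier_vec n"
    and eq: "\<And>k. k < n \<Longrightarrow> x \<bullet>c ws ! k = y \<bullet>c ws ! k"
  shows "x = y"
  using orthonormal_expansion[OF on len x] orthonormal_expansion[OF on len y]
    lincomb_vec_cong[of ws "\<lambda>k. x \<bullet>c ws ! k" "\<lambda>k. y \<bullet>c ws ! k" n] eq len by simp

definition vec_normalize :: "complex vec \<Rightarrow> complex vec" where
  "vec_normalize x = complex_of_real (1 / sqrt (Re (x \<bullet>c x))) \<cdot>\<^sub>v x"

lemma vec_normalize_carrier [simp]: "x \<in> carrier_vec n \<Longrightarrow> vec_normalize x \<in> carrier_vec n"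
  by (simp add: vec_normalize_def)

lemma vec_normalize_cscalar_prod:
  assumes "x \<in> carrier_vec n" "y \<in> carrier_vec n"
  shows "vec_normalize x \<bullet>c vec_normalize y =
    complex_of_real (1 / (sqrt (Re (x \<bullet>c x)) * sqrt (Re (y \<bullet>c y)))) * (x \<bullet>c y)"
  unfolding vec_normalize_def cscalar_prod_smult[OF assms] by simp

lemma vec_normalize_unit:
  assumes x: "x \<in> carrier_vec n" and x0: "x \<noteq> 0\<^sub>v n"
  shows "vec_normalize x \<bullet>c vec_normalize x = 1"
proof -
  define r where "r = Re (x \<bullet>c x)"
  have "x \<bullet>c x > 0" using x x0 by simp
  then have xx: "x \<bullet>c x = complex_of_real r" and r: "r > 0"
    by (auto simp: r_def less_complex_def complex_eq_iff)
  have "vec_normalize x \<bullet>c vec_normalize x = complex_of_real (1 / (sqrt r * sqrt r) * r)"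
    unfolding vec_normalize_cscalar_prod[OF x x] r_def[symmetric] xx by simp
  also have "1 / (sqrt r * sqrt r) * r = 1" using r by simp
  finally show ?thesis by simp
qed

lemma corthogonal_normalize:
  assumes orth: "corthogonal gs" and gs: "set gs \<subseteq> carrier_vec n"
  shows "orthonormal n (map vec_normalize gs)"
  unfolding orthonormal_def
proof (intro conjI allI impI)
  show "set (map vec_normalize gs) \<subseteq> carrier_vec n" using gs by auto
  fix i j assume "i < length (map vec_normalize gs)" "j < length (map vec_normalize gs)"
  then have i: "i < length gs" and j: "j < length gs" by auto
  have gi: "gs ! i \<in> carrier_vec n" and gj: "gs ! j \<in> carrier_vec n" using gs i j by auto
  show "map vec_normalize gs ! i \<bullet>c map vec_normalize gs ! j = (if i = j then 1 else 0)"
  proof (cases "i = j")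
    case True
    have "gs ! i \<noteq> 0\<^sub>v n" using corthogonalD[OF orth i i] gi by auto
    then show ?thesis using True vec_normalize_unit[OF gi] i by simp
  next
    case False
    then show ?thesis using corthogonalD[OF orth i j] vec_normalize_cscalar_prod[OF gi gj] i j by simp
  qed
qed

lemma orthonormal_extension:
  assumes v: "v \<in> carrier_vec (Suc n)" and v1: "v \<bullet>c v = 1"
  shows "\<exists>ws. length ws = n \<and> orthonormal (Suc n) (v # ws)"
proof -
  interpret cof_vec_space "Suc n" "TYPE(complex)" .
  have v0: "v \<noteq> 0\<^sub>v (Suc n)" using v1 by auto
  define b where "b = basis_completion v"
  note b = basis_completion[OF v v0, folded b_def]
  define gs where "gs = gram_schmidt (Suc n) b"
  note gs = gram_schmidt_result[OF b(2,4,5) gs_def]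
  obtain b' where "b = v # b'" using b(6,7) by (cases b) auto
  then have "hd gs = v" unfolding gs_def by (simp add: v)
  then obtain gs' where gs_Cons: "gs = v # gs'" using gs(4) b(6) by (cases gs) auto
  have "vec_normalize v = v" using v1 by (simp add: vec_normalize_def)
  then have "map vec_normalize gs = v # map vec_normalize gs'" using gs_Cons by simp
  moreover have "orthonormal (Suc n) (map vec_normalize gs)"
    by (rule corthogonal_normalize[OF gs(2,3)])
  moreover have "length (map vec_normalize gs') = n" using gs(4) b(6) gs_Cons by simp
  ultimately show ?thesis by metis
qed

lemma lincomb_vec_cscalar_prod_orth:
  assumes "set ws \<subseteq> carrier_vec n" "y \<in> carrier_vec n" "\<forall>w\<in>set ws. w \<bullet>c y = 0"
  shows "lincomb_vec n ws c \<bullet>c y = 0"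
  using assms by (simp add: lincomb_vec_cscalar_prod)

lemma orthonormal_map_lincomb:
  assumes on: "orthonormal n ws" and ys: "orthonormal (length ws) ys"
  shows "orthonormal n (map (\<lambda>y. lincomb_vec n ws (\<lambda>i. y $ i)) ys)"
  unfolding orthonormal_def
proof (intro conjI allI impI)
  show "set (map (\<lambda>y. lincomb_vec n ws (\<lambda>i. y $ i)) ys) \<subseteq> carrier_vec n" by auto
  fix i j assume "i < length (map (\<lambda>y. lincomb_vec n ws (\<lambda>i. y $ i)) ys)"
    "j < length (map (\<lambda>y. lincomb_vec n ws (\<lambda>i. y $ i)) ys)"
  then have i: "i < length ys" and j: "j < length ys" by auto
  have "lincomb_vec n ws (\<lambda>l. ys ! i $ l) \<bullet>c lincomb_vec n ws (\<lambda>l. ys ! j $ l) = ys ! i \<bullet>c ys ! j"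
    using orthonormal_lincomb_cscalar_lincomb[OF on]
      cscalar_prod_sum[OF orthonormalD(1)[OF ys i] orthonormalD(1)[OF ys j]] by simp
  then show "map (\<lambda>y. lincomb_vec n ws (\<lambda>i. y $ i)) ys ! i \<bullet>c map (\<lambda>y. lincomb_vec n ws (\<lambda>i. y $ i)) ys ! j
      = (if i = j then 1 else 0)"
    using orthonormalD(2)[OF ys i j] i j by simp
qed

lemma hermitian_unit_eigenvector:
  assumes A: "hermitian_mat (Suc n) A"
  obtains v e where "v \<in> carrier_vec (Suc n)" "v \<bullet>c v = 1" "A *\<^sub>v v = complex_of_real e \<cdot>\<^sub>v v"
proof -
  note Ac = hermitian_matD(1)[OF A]
  obtain e where "eigenvalue A e" using spectrum_non_empty[OF Ac] unfolding spectrum_def by auto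
  then obtain x where x: "x \<in> carrier_vec (Suc n)" "x \<noteq> 0\<^sub>v (Suc n)" and Ax: "A *\<^sub>v x = e \<cdot>\<^sub>v x"
    unfolding eigenvalue_def eigenvector_def using Ac by auto
  define v where "v = vec_normalize x"
  have v: "v \<in> carrier_vec (Suc n)" "v \<bullet>c v = 1"
    unfolding v_def using x vec_normalize_unit by auto
  have Av: "A *\<^sub>v v = e \<cdot>\<^sub>v v"
    unfolding v_def vec_normalize_def using mult_mat_vec[OF Ac x(1)] Ax
    by (simp add: smult_smult_assoc mult.commute)
  have "e = (A *\<^sub>v v) \<bullet>c v" using cscalar_prod_smult[OF v(1) v(1), of e 1] v(2) by (simp add: Av)
  also have "\<dots> = v \<bullet>c (A *\<^sub>v v)" by (rule hermitian_mat_cscalar_prod[OF A v(1) v(1)])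
  also have "\<dots> = cnj e" using cscalar_prod_smult[OF v(1) v(1), of 1 e] v(2) by (simp add: Av)
  finally have "e = complex_of_real (Re e)" by (simp add: complex_eq_iff)
  with v Av that show ?thesis by metis
qed

definition compress_mat :: "complex mat \<Rightarrow> complex vec list \<Rightarrow> complex mat" where
  "compress_mat A ws = mat (length ws) (length ws) (\<lambda>(i, k). (A *\<^sub>v ws ! k) \<bullet>c ws ! i)"

lemma hermitian_compress_mat:
  assumes A: "hermitian_mat n A" and ws: "set ws \<subseteq> carrier_vec n"
  shows "hermitian_mat (length ws) (compress_mat A ws)"
  unfolding hermitian_mat_def
proof (intro conjI allI impI)
  show "compress_mat A ws \<in> carrier_mat (length ws) (length ws)" by (simp add: compress_mat_def)
  fix i k assume i: "i < length ws" and k: "k < length ws"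
  have wi: "ws ! i \<in> carrier_vec n" and wk: "ws ! k \<in> carrier_vec n" using ws i k by auto
  have "(A *\<^sub>v ws ! k) \<bullet>c ws ! i = ws ! k \<bullet>c (A *\<^sub>v ws ! i)"
    by (rule hermitian_mat_cscalar_prod[OF A wk wi])
  also have "\<dots> = cnj ((A *\<^sub>v ws ! i) \<bullet>c ws ! k)"
    using cscalar_prod_cnj[of "A *\<^sub>v ws ! i" n "ws ! k"] wi wk hermitian_matD(1)[OF A] by simp
  finally show "compress_mat A ws $$ (i, k) = cnj (compress_mat A ws $$ (k, i))"
    using i k by (simp add: compress_mat_def)
qed

lemma compress_mat_mult_vec:
  assumes A: "hermitian_mat n A" and ws: "set ws \<subseteq> carrier_vec n"
    and y: "y \<in> carrier_vec (length ws)" and i: "i < length ws"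
  shows "(A *\<^sub>v lincomb_vec n ws (\<lambda>l. y $ l)) \<bullet>c ws ! i = (compress_mat A ws *\<^sub>v y) $ i"
proof -
  note Ac = hermitian_matD(1)[OF A]
  have wsc: "l < length ws \<Longrightarrow> ws ! l \<in> carrier_vec n" for l using ws by auto
  have "(A *\<^sub>v lincomb_vec n ws (\<lambda>l. y $ l)) \<bullet>c ws ! i = lincomb_vec n ws (\<lambda>l. y $ l) \<bullet>c (A *\<^sub>v ws ! i)"
    by (rule hermitian_mat_cscalar_prod[OF A lincomb_vec_carrier wsc[OF i]])
  also have "\<dots> = (\<Sum>l<length ws. y $ l * (ws ! l \<bullet>c (A *\<^sub>v ws ! i)))"
    using lincomb_vec_cscalar_prod[OF ws] Ac wsc[OF i] by simp
  also have "\<dots> = (\<Sum>l<length ws. compress_mat A ws $$ (i, l) * y $ l)"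
  proof (intro sum.cong refl)
    fix l assume l: "l \<in> {..<length ws}"
    then have "ws ! l \<bullet>c (A *\<^sub>v ws ! i) = (A *\<^sub>v ws ! l) \<bullet>c ws ! i"
      using hermitian_mat_cscalar_prod[OF A wsc wsc[OF i]] by simp
    then show "y $ l * (ws ! l \<bullet>c (A *\<^sub>v ws ! i)) = compress_mat A ws $$ (i, l) * y $ l"
      using l i by (simp add: compress_mat_def)
  qed
  also have "\<dots> = (compress_mat A ws *\<^sub>v y) $ i"
    by (rule mult_mat_vec_sum[symmetric]) (use i y in \<open>auto simp: compress_mat_def\<close>)
  finally show ?thesis .
qed

lemma compress_mat_eigenvector:
  assumes A: "hermitian_mat (Suc n) A" and on: "orthonormal (Suc n) (v # ws)" and len: "length ws = n"
    and Av: "A *\<^sub>v v = complex_of_real e \<cdot>\<^sub>v v"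
    and y: "y \<in> carrier_vec n" and By: "compress_mat A ws *\<^sub>v y = \<mu> \<cdot>\<^sub>v y"
  shows "A *\<^sub>v lincomb_vec (Suc n) ws (\<lambda>i. y $ i) = \<mu> \<cdot>\<^sub>v lincomb_vec (Suc n) ws (\<lambda>i. y $ i)"
proof -
  define x where "x = lincomb_vec (Suc n) ws (\<lambda>i. y $ i)"
  from on have onws: "orthonormal (Suc n) ws" and v: "v \<in> carrier_vec (Suc n)"
    and orth: "\<forall>w\<in>set ws. w \<bullet>c v = 0"
    by (auto simp: orthonormal_Cons)
  note Ac = hermitian_matD(1)[OF A] and wsc = orthonormalD(1)[OF onws, unfolded len]
  have x: "x \<in> carrier_vec (Suc n)" by (simp add: x_def)
  have xv: "x \<bullet>c v = 0"
    unfolding x_def by (rule lincomb_vec_cscalar_prod_orth[OF orthonormal_carrier[OF onws] v orth])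
  have "(A *\<^sub>v x) \<bullet>c v = x \<bullet>c (A *\<^sub>v v)" by (rule hermitian_mat_cscalar_prod[OF A x v])
  also have "\<dots> = (\<mu> \<cdot>\<^sub>v x) \<bullet>c v"
    using cscalar_prod_smult[OF x v, of 1 "complex_of_real e"] cscalar_prod_smult[OF x v, of \<mu> 1] xv
    by (simp add: Av)
  finally have coeff_v: "(A *\<^sub>v x) \<bullet>c v = (\<mu> \<cdot>\<^sub>v x) \<bullet>c v" .
  have coeff_w: "(A *\<^sub>v x) \<bullet>c ws ! i = (\<mu> \<cdot>\<^sub>v x) \<bullet>c ws ! i" if i: "i < n" for i
    using compress_mat_mult_vec[OF A orthonormal_carrier[OF onws], of y i] By i y len
      cscalar_prod_smult[OF x wsc[OF i], of \<mu> 1] orthonormal_lincomb_cscalar_prod[OF onws]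
    by (simp add: x_def)
  have "A *\<^sub>v x = \<mu> \<cdot>\<^sub>v x"
  proof (rule orthonormal_basis_eqI[OF on])
    fix k assume "k < Suc n"
    then show "(A *\<^sub>v x) \<bullet>c (v # ws) ! k = (\<mu> \<cdot>\<^sub>v x) \<bullet>c (v # ws) ! k"
      using coeff_v coeff_w by (cases k) auto
  qed (use len Ac x in auto)
  then show ?thesis by (simp add: x_def)
qed

theorem hermitian_eigenbasis:
  "hermitian_mat n A \<Longrightarrow> \<exists>ws lam. orthonormal n ws \<and> length ws = n \<and>
     (\<forall>k<n. A *\<^sub>v ws ! k = complex_of_real (lam k) \<cdot>\<^sub>v ws ! k)"
proof (induction n arbitrary: A)
  case 0
  show ?case by (rule exI[of _ "[]"]) (simp add: orthonormal_def)
next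
  case (Suc n A)
  obtain v e where v: "v \<in> carrier_vec (Suc n)" "v \<bullet>c v = 1" and Av: "A *\<^sub>v v = complex_of_real e \<cdot>\<^sub>v v"
    using hermitian_unit_eigenvector[OF Suc.prems] by blast
  obtain ws where len: "length ws = n" and on: "orthonormal (Suc n) (v # ws)"
    using orthonormal_extension[OF v] by blast
  have onws: "orthonormal (Suc n) ws" using on by (simp add: orthonormal_Cons)
  obtain ys lam where ys: "orthonormal n ys" "length ys = n"
    and Bys: "\<And>k. k < n \<Longrightarrow> compress_mat A ws *\<^sub>v ys ! k = complex_of_real (lam k) \<cdot>\<^sub>v ys ! k"
    using Suc.IH[OF hermitian_compress_mat[OF Suc.prems orthonormal_carrier[OF onws], unfolded len]]
    by auto
  define E where "E y = lincomb_vec (Suc n) ws (\<lambda>i. y $ i)" for y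
  have "orthonormal (Suc n) (v # map E ys)"
    unfolding orthonormal_Cons E_def
    using orthonormal_map_lincomb[OF onws] ys(1) len v on
      lincomb_vec_cscalar_prod_orth[OF orthonormal_carrier[OF onws] v(1)]
    by (auto simp: orthonormal_Cons)
  moreover have "A *\<^sub>v (v # map E ys) ! k = complex_of_real (case k of 0 \<Rightarrow> e | Suc i \<Rightarrow> lam i) \<cdot>\<^sub>v (v # map E ys) ! k"
    if "k < Suc n" for k
    using that Av compress_mat_eigenvector[OF Suc.prems on len Av orthonormalD(1)[OF ys(1)] Bys] ys(2)
    by (cases k) (auto simp: E_def)
  ultimately show ?case using ys(2) by (metis length_Cons length_map)
qed

lemma one_mat_orthonormal_expansion:
  assumes on: "orthonormal n ws" and len: "length ws = n" and j: "j < n" and c: "c < n"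
  shows "1\<^sub>m n $$ (j, c) = (\<Sum>k<n. ws ! k $ j * cnj (ws ! k $ c))"
proof -
  have "1\<^sub>m n $$ (j, c) = lincomb_vec n ws (\<lambda>k. unit_vec n c \<bullet>c ws ! k) $ j"
    using orthonormal_expansion[OF on len, of "unit_vec n c"] j c by simp
  also have "\<dots> = (\<Sum>k<n. ws ! k $ j * cnj (ws ! k $ c))"
    unfolding index_lincomb_vec[OF j] len
  proof (intro sum.cong refl)
    fix k assume "k \<in> {..<n}"
    then have "ws ! k \<in> carrier_vec n" using orthonormalD(1)[OF on] len by simp
    then have "unit_vec n c \<bullet>c ws ! k = cnj (ws ! k $ c)"
      using c by (subst scalar_prod_left_unit[of _ n]) auto
    then show "(unit_vec n c \<bullet>c ws ! k) * ws ! k $ j = ws ! k $ j * cnj (ws ! k $ c)" by simp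
  qed
  finally show ?thesis .
qed

lemma mat_orthonormal_expansion:
  assumes on: "orthonormal n ws" and len: "length ws = n" and A: "A \<in> carrier_mat n n"
    and r: "r < n" and c: "c < n"
  shows "A $$ (r, c) = (\<Sum>k<n. (A *\<^sub>v ws ! k) $ r * cnj (ws ! k $ c))"
proof -
  have "A $$ (r, c) = (\<Sum>j<n. A $$ (r, j) * 1\<^sub>m n $$ (j, c))"
    using c by (simp add: if_distrib cong: if_cong)
  also have "\<dots> = (\<Sum>j<n. \<Sum>k<n. A $$ (r, j) * (ws ! k $ j * cnj (ws ! k $ c)))"
    by (intro sum.cong refl) (simp add: one_mat_orthonormal_expansion[OF on len _ c] sum_distrib_left)
  also have "\<dots> = (\<Sum>k<n. \<Sum>j<n. A $$ (r, j) * (ws ! k $ j * cnj (ws ! k $ c)))"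
    by (rule sum.swap)
  also have "\<dots> = (\<Sum>k<n. (A *\<^sub>v ws ! k) $ r * cnj (ws ! k $ c))"
    using orthonormalD(1)[OF on] len
    by (intro sum.cong refl)
      (simp add: mult_mat_vec_sum[OF A _ r] sum_distrib_left mult_ac del: index_mult_mat_vec)
  finally show ?thesis .
qed

definition spectral_mat :: "nat \<Rightarrow> complex vec list \<Rightarrow> (nat \<Rightarrow> real) \<Rightarrow> complex mat" where
  "spectral_mat n ws f = mat n n (\<lambda>(r, c). \<Sum>k<n. complex_of_real (f k) * ws ! k $ r * cnj (ws ! k $ c))"

lemma spectral_mat_carrier [simp]: "spectral_mat n ws f \<in> carrier_mat n n"
  by (simp add: spectral_mat_def)

lemma dim_spectral_mat [simp]:
  "dim_row (spectral_mat n ws f) = n" "dim_col (spectral_mat n ws f) = n"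
  by (simp_all add: spectral_mat_def)

lemma index_spectral_mat:
  "r < n \<Longrightarrow> c < n \<Longrightarrow>
   spectral_mat n ws f $$ (r, c) = (\<Sum>k<n. complex_of_real (f k) * ws ! k $ r * cnj (ws ! k $ c))"
  by (simp add: spectral_mat_def)

lemma spectral_mat_cong: "(\<And>k. k < n \<Longrightarrow> f k = g k) \<Longrightarrow> spectral_mat n ws f = spectral_mat n ws g"
  by (auto simp: spectral_mat_def intro!: eq_matI sum.cong)

lemma smult_spectral_mat_minus:
  "complex_of_real a \<cdot>\<^sub>m spectral_mat n ws f - spectral_mat n ws g = spectral_mat n ws (\<lambda>k. a * f k - g k)"
  by (rule eq_matI) (auto simp: index_spectral_mat sum_distrib_left sum_subtractf[symmetric] algebra_simps)

lemma spectral_mat_minus_smult: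
  "spectral_mat n ws f - complex_of_real a \<cdot>\<^sub>m spectral_mat n ws g = spectral_mat n ws (\<lambda>k. f k - a * g k)"
  by (rule eq_matI) (auto simp: index_spectral_mat sum_distrib_left sum_subtractf[symmetric] algebra_simps)

lemma spectral_mat_mult_vec:
  assumes ws: "set ws \<subseteq> carrier_vec n" and len: "length ws = n" and x: "x \<in> carrier_vec n"
  shows "spectral_mat n ws f *\<^sub>v x = lincomb_vec n ws (\<lambda>k. complex_of_real (f k) * (x \<bullet>c ws ! k))"
proof (rule eq_vecI)
  fix r assume "r < dim_vec (lincomb_vec n ws (\<lambda>k. complex_of_real (f k) * (x \<bullet>c ws ! k)))"
  then have r: "r < n" by simp
  have wsc: "k < n \<Longrightarrow> ws ! k \<in> carrier_vec n" for k using ws len by auto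
  have "(spectral_mat n ws f *\<^sub>v x) $ r
      = (\<Sum>c<n. \<Sum>k<n. complex_of_real (f k) * ws ! k $ r * (x $ c * cnj (ws ! k $ c)))"
    using r x by (simp add: mult_mat_vec_sum[of _ n n] index_spectral_mat sum_distrib_left sum_distrib_right
        mult_ac del: index_mult_mat_vec)
  also have "\<dots> = (\<Sum>k<n. complex_of_real (f k) * (x \<bullet>c ws ! k) * ws ! k $ r)"
    using x wsc by (subst sum.swap) (simp add: cscalar_prod_sum[of _ n] sum_distrib_left mult_ac)
  also have "\<dots> = lincomb_vec n ws (\<lambda>k. complex_of_real (f k) * (x \<bullet>c ws ! k)) $ r"
    using r len by (simp add: index_lincomb_vec)
  finally show "(spectral_mat n ws f *\<^sub>v x) $ r = lincomb_vec n ws (\<lambda>k. complex_of_real (f k) * (x \<bullet>c ws ! k)) $ r" .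
qed simp

lemma spectral_mat_eigenvector:
  assumes on: "orthonormal n ws" and len: "length ws = n" and j: "j < n"
  shows "spectral_mat n ws f *\<^sub>v ws ! j = complex_of_real (f j) \<cdot>\<^sub>v ws ! j"
proof -
  note wj = orthonormalD(1)[OF on, unfolded len, OF j] and orth = orthonormalD(2)[OF on, unfolded len, OF j]
  have "spectral_mat n ws f *\<^sub>v ws ! j = lincomb_vec n ws (\<lambda>k. complex_of_real (f k) * (ws ! j \<bullet>c ws ! k))"
    by (rule spectral_mat_mult_vec[OF orthonormal_carrier[OF on] len wj])
  also have "\<dots> = lincomb_vec n ws (\<lambda>k. complex_of_real (f j) * (ws ! j \<bullet>c ws ! k))"
    using orth len by (intro lincomb_vec_cong) simp
  also have "\<dots> = complex_of_real (f j) \<cdot>\<^sub>v ws ! j"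
    unfolding lincomb_vec_smult orthonormal_expansion[OF on len wj, symmetric] ..
  finally show ?thesis .
qed

lemma mat_eq_spectral_mat:
  assumes on: "orthonormal n ws" and len: "length ws = n" and A: "A \<in> carrier_mat n n"
    and eig: "\<And>k. k < n \<Longrightarrow> A *\<^sub>v ws ! k = complex_of_real (f k) \<cdot>\<^sub>v ws ! k"
  shows "A = spectral_mat n ws f"
proof (rule eq_matI)
  fix r c assume "r < dim_row (spectral_mat n ws f)" "c < dim_col (spectral_mat n ws f)"
  then have r: "r < n" and c: "c < n" by auto
  show "A $$ (r, c) = spectral_mat n ws f $$ (r, c)"
    unfolding mat_orthonormal_expansion[OF on len A r c] index_spectral_mat[OF r c]
  proof (intro sum.cong refl)
    fix k assume "k \<in> {..<n}"
    then have "k < n" "ws ! k \<in> carrier_vec n" using orthonormalD(1)[OF on] len by auto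
    then show "(A *\<^sub>v ws ! k) $ r * cnj (ws ! k $ c) = complex_of_real (f k) * ws ! k $ r * cnj (ws ! k $ c)"
      using r by (simp add: eig)
  qed
qed (use A in auto)

lemma spectral_mat_mult:
  assumes on: "orthonormal n ws" and len: "length ws = n"
  shows "spectral_mat n ws f * spectral_mat n ws g = spectral_mat n ws (\<lambda>k. f k * g k)"
proof (rule mat_eq_spectral_mat[OF on len])
  fix k assume k: "k < n"
  note wk = orthonormalD(1)[OF on, unfolded len, OF k]
  have "(spectral_mat n ws f * spectral_mat n ws g) *\<^sub>v ws ! k
      = spectral_mat n ws f *\<^sub>v (spectral_mat n ws g *\<^sub>v ws ! k)"
    using wk by (simp add: assoc_mult_mat_vec[of _ n n _ n])
  also have "\<dots> = complex_of_real (f k * g k) \<cdot>\<^sub>v ws ! k"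
    using wk by (simp add: spectral_mat_eigenvector[OF on len k] mult_mat_vec[of _ n n]
        smult_smult_assoc mult.commute)
  finally show "(spectral_mat n ws f * spectral_mat n ws g) *\<^sub>v ws ! k = complex_of_real (f k * g k) \<cdot>\<^sub>v ws ! k" .
qed (rule mult_carrier_mat[OF spectral_mat_carrier spectral_mat_carrier])

lemma spectral_mat_one:
  assumes on: "orthonormal n ws" and len: "length ws = n"
  shows "spectral_mat n ws (\<lambda>k. 1) = 1\<^sub>m n"
  by (rule mat_eq_spectral_mat[OF on len, symmetric]) (use orthonormalD(1)[OF on] len in auto)

lemma spectral_mat_cscalar_prod:
  assumes on: "orthonormal n ws" and len: "length ws = n" and x: "x \<in> carrier_vec n"
  shows "(spectral_mat n ws f *\<^sub>v x) \<bullet>c x = complex_of_real (\<Sum>k<n. f k * (cmod (x \<bullet>c ws ! k))\<^sup>2)"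
proof -
  have "(spectral_mat n ws f *\<^sub>v x) \<bullet>c x
      = lincomb_vec n ws (\<lambda>k. complex_of_real (f k) * (x \<bullet>c ws ! k)) \<bullet>c lincomb_vec n ws (\<lambda>k. x \<bullet>c ws ! k)"
    using spectral_mat_mult_vec[OF orthonormal_carrier[OF on] len x] orthonormal_expansion[OF on len x]
    by simp
  also have "\<dots> = complex_of_real (\<Sum>k<n. f k * (cmod (x \<bullet>c ws ! k))\<^sup>2)"
    unfolding orthonormal_lincomb_cscalar_lincomb[OF on] len of_real_sum
    by (intro sum.cong refl) (simp only: of_real_mult complex_norm_square mult.assoc)
  finally show ?thesis .
qed

lemma spectral_mat_unitary_diag:
  assumes on: "orthonormal n ws" and len: "length ws = n"
  shows "spectral_mat n ws f
    = mat_of_cols n ws * mat_diag n (\<lambda>i. complex_of_real (f i)) * mat_adjoint (mat_of_cols n ws)"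
proof (rule eq_matI)
  let ?U = "mat_of_cols n ws"
  have U: "?U \<in> carrier_mat n n" using len by auto
  fix r c assume "r < dim_row (?U * mat_diag n (\<lambda>i. complex_of_real (f i)) * mat_adjoint ?U)"
    "c < dim_col (?U * mat_diag n (\<lambda>i. complex_of_real (f i)) * mat_adjoint ?U)"
  then have r: "r < n" and c: "c < n" using U by auto
  have "(?U * mat_diag n (\<lambda>i. complex_of_real (f i)) * mat_adjoint ?U) $$ (r, c)
     = (\<Sum>k<n. (ws ! k $ r * complex_of_real (f k)) * cnj (ws ! k $ c))"
    unfolding mat_diag_mult_right[OF U] using r c U len
    by (simp add: scalar_prod_def lessThan_atLeast0 row_def col_def mat_of_cols_index)
  then show "spectral_mat n ws f $$ (r, c) = (?U * mat_diag n (\<lambda>i. complex_of_real (f i)) * mat_adjoint ?U) $$ (r, c)"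
    by (simp add: index_spectral_mat r c mult_ac)
qed (use len in auto)

lemma minv_eqI:
  assumes M: "(M :: complex mat) \<in> carrier_mat n n" and N: "N \<in> carrier_mat n n"
    and MN: "M * N = 1\<^sub>m n" and NM: "N * M = 1\<^sub>m n"
  shows "minv M = N"
proof (cases "mat_inverse M")
  case None
  have "M \<in> Units (ring_mat TYPE(complex) n undefined)"
    unfolding Units_def ring_mat_def using M N MN NM by auto
  then show ?thesis using mat_inverse(1)[OF M None, of undefined] by blast
next
  case (Some B)
  from mat_inverse(2)[OF M Some] have MB: "M * B = 1\<^sub>m n" and B: "B \<in> carrier_mat n n" by auto
  have "B = (N * M) * B" using B NM by simp
  also have "\<dots> = N * (M * B)" using N M B by simp
  also have "\<dots> = N" using MB N by simp
  finally show ?thesis unfolding minv_def Some by simp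
qed

lemma minv_spectral_mat:
  assumes on: "orthonormal n ws" and len: "length ws = n" and f: "\<And>k. k < n \<Longrightarrow> f k \<noteq> 0"
  shows "minv (spectral_mat n ws f) = spectral_mat n ws (\<lambda>k. 1 / f k)"
  by (rule minv_eqI[of _ n])
    (use f in \<open>simp_all add: spectral_mat_mult[OF on len] spectral_mat_one[OF on len, symmetric]
      cong: spectral_mat_cong\<close>)

lemma mat_diag_intertwine_fun:
  assumes W: "W \<in> carrier_mat n n"
    and WD: "W * mat_diag n (\<lambda>i. complex_of_real (l i)) = mat_diag n (\<lambda>i. complex_of_real (l' i)) * W"
  shows "W * mat_diag n (\<lambda>i. complex_of_real (g (l i))) = mat_diag n (\<lambda>i. complex_of_real (g (l' i))) * W"
proof (rule eq_matI)
  fix i j assume "i < dim_row (mat_diag n (\<lambda>i. complex_of_real (g (l' i))) * W)"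
    "j < dim_col (mat_diag n (\<lambda>i. complex_of_real (g (l' i))) * W)"
  then have i: "i < n" and j: "j < n" using W by (auto simp: mat_diag_def)
  have "W $$ (i, j) * complex_of_real (l j) = complex_of_real (l' i) * W $$ (i, j)"
    using arg_cong[OF WD, of "\<lambda>M. M $$ (i, j)"] i j
    unfolding mat_diag_mult_right[OF W] mat_diag_mult_left[OF W] by simp
  \<comment> \<open>a nonzero entry \<open>W $$ (i, j)\<close> forces \<open>l j = l' i\<close>\<close>
  then have "W $$ (i, j) * complex_of_real (g (l j)) = complex_of_real (g (l' i)) * W $$ (i, j)"
    by (cases "W $$ (i, j) = 0") (auto simp: mult.commute)
  then show "(W * mat_diag n (\<lambda>i. complex_of_real (g (l i)))) $$ (i, j)
      = (mat_diag n (\<lambda>i. complex_of_real (g (l' i))) * W) $$ (i, j)"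
    unfolding mat_diag_mult_right[OF W] mat_diag_mult_left[OF W] using i j by simp
qed (use W in \<open>auto simp: mat_diag_def\<close>)

lemma unitary_mat_adjoint_right:
  "unitary_mat n U \<Longrightarrow> U * mat_adjoint U = 1\<^sub>m n"
  unfolding unitary_mat_def by (metis mat_adjoint_carrier mat_mult_left_right_inverse)

lemma unitary_diag_fun_eq:
  assumes U: "unitary_mat n U" and V: "unitary_mat n V"
    and eq: "U * mat_diag n (\<lambda>i. complex_of_real (l i)) * mat_adjoint U
           = V * mat_diag n (\<lambda>i. complex_of_real (l' i)) * mat_adjoint V"
  shows "U * mat_diag n (\<lambda>i. complex_of_real (g (l i))) * mat_adjoint U
       = V * mat_diag n (\<lambda>i. complex_of_real (g (l' i))) * mat_adjoint V"
proof -
  have Uc [simp]: "U \<in> carrier_mat n n" and UU: "mat_adjoint U * U = 1\<^sub>m n"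
    and Vc [simp]: "V \<in> carrier_mat n n" and VV: "mat_adjoint V * V = 1\<^sub>m n"
    using U V by (auto simp: unitary_mat_def)
  note UU' = unitary_mat_adjoint_right[OF U] and VV' = unitary_mat_adjoint_right[OF V]
  define W where "W = mat_adjoint V * U"
  have Wc [simp]: "W \<in> carrier_mat n n"
    unfolding W_def by (rule mult_carrier_mat[OF mat_adjoint_carrier[OF Vc] Uc])
  have cancel: "P * Q = 1\<^sub>m n \<Longrightarrow> P \<in> carrier_mat n n \<Longrightarrow> Q \<in> carrier_mat n n \<Longrightarrow> X \<in> carrier_mat n n
      \<Longrightarrow> P * (Q * X) = X" for P Q X :: "complex mat"
    by (metis assoc_mult_mat left_mult_one_mat)
  note simps = assoc_mult_mat[of _ n n _ n _ n] mult_carrier_mat[of _ n n _ n]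
    right_mult_one_mat[of _ n n] left_mult_one_mat[of _ n n]
  let ?D = "\<lambda>l. mat_diag n (\<lambda>i. complex_of_real (l i))"
  have [simp]: "?D l \<in> carrier_mat n n" for l by simp
  have "W * ?D l = mat_adjoint V * (U * ?D l * mat_adjoint U) * U"
    by (simp add: W_def simps cancel[OF UU] UU)
  also have "\<dots> = ?D l' * W"
    unfolding eq by (simp add: W_def simps cancel[OF VV])
  finally have WG: "W * ?D (g \<circ> l) = ?D (g \<circ> l') * W"
    using mat_diag_intertwine_fun[OF Wc] by simp
  have "U * ?D (g \<circ> l) * mat_adjoint U = V * (W * ?D (g \<circ> l)) * mat_adjoint U"
    by (simp add: W_def simps cancel[OF VV'])
  also have "\<dots> = V * (?D (g \<circ> l') * W) * mat_adjoint U"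
    unfolding WG ..
  also have "\<dots> = V * ?D (g \<circ> l') * mat_adjoint V"
    by (simp add: W_def simps UU')
  finally show ?thesis by simp
qed

lemma mat_log_spectral_mat:
  assumes on: "orthonormal n ws" and len: "length ws = n" and f: "\<forall>k<n. 0 < f k"
  shows "mat_log (spectral_mat n ws f) = spectral_mat n ws (\<lambda>k. ln (f k))"
  unfolding mat_log_def dim_spectral_mat
proof (rule the_equality)
  show "\<exists>U lam. unitary_mat n U \<and> (\<forall>i<n. 0 < lam i) \<and>
      spectral_mat n ws f = U * mat_diag n (\<lambda>i. complex_of_real (lam i)) * mat_adjoint U \<and>
      spectral_mat n ws (\<lambda>k. ln (f k)) = U * mat_diag n (\<lambda>i. complex_of_real (ln (lam i))) * mat_adjoint U"
    using orthonormal_unitary(1)[OF on len] f spectral_mat_unitary_diag[OF on len] by blast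
next
  fix L assume "\<exists>U lam. unitary_mat n U \<and> (\<forall>i<n. 0 < lam i) \<and>
      spectral_mat n ws f = U * mat_diag n (\<lambda>i. complex_of_real (lam i)) * mat_adjoint U \<and>
      L = U * mat_diag n (\<lambda>i. complex_of_real (ln (lam i))) * mat_adjoint U"
  then obtain V lam where V: "unitary_mat n V"
    and eq: "spectral_mat n ws f = V * mat_diag n (\<lambda>i. complex_of_real (lam i)) * mat_adjoint V"
    and L: "L = V * mat_diag n (\<lambda>i. complex_of_real (ln (lam i))) * mat_adjoint V" by blast
  show "L = spectral_mat n ws (\<lambda>k. ln (f k))"
    using unitary_diag_fun_eq[OF orthonormal_unitary(1)[OF on len] V, of f lam ln] eq L
    by (simp add: spectral_mat_unitary_diag[OF on len])
qed

lemma hermitian_gram_sum: "hermitian_mat d (gram_sum d v S)"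
  unfolding hermitian_mat_def by (auto simp: gram_sum_def cnj_sum mult.commute)

lemma gram_sum_diff:
  "finite T \<Longrightarrow> S \<subseteq> T \<Longrightarrow> gram_sum d v (T - S) = gram_sum d v T - gram_sum d v S"
  by (rule eq_matI) (auto simp: gram_sum_def sum_diff)

lemma mtrace_gram_sum_mult:
  assumes F: "F \<in> carrier_mat d d" and v: "\<And>i. i \<in> S \<Longrightarrow> v i \<in> carrier_vec d"
  shows "mtrace (gram_sum d v S * F) = (\<Sum>i\<in>S. (F *\<^sub>v v i) \<bullet>c v i)"
proof -
  have "mtrace (gram_sum d v S * F) = (\<Sum>r<d. \<Sum>c<d. \<Sum>i\<in>S. F $$ (c, r) * v i $ r * cnj (v i $ c))"
    unfolding mtrace_def using F
    by (simp add: scalar_prod_def lessThan_atLeast0 row_def col_def gram_sum_def sum_distrib_left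
        sum_distrib_right mult_ac)
  also have "\<dots> = (\<Sum>r<d. \<Sum>i\<in>S. \<Sum>c<d. F $$ (c, r) * v i $ r * cnj (v i $ c))"
    by (rule sum.cong[OF refl], rule sum.swap)
  also have "\<dots> = (\<Sum>i\<in>S. \<Sum>r<d. \<Sum>c<d. F $$ (c, r) * v i $ r * cnj (v i $ c))"
    by (rule sum.swap)
  also have "\<dots> = (\<Sum>i\<in>S. \<Sum>c<d. \<Sum>r<d. F $$ (c, r) * v i $ r * cnj (v i $ c))"
    by (rule sum.cong[OF refl], rule sum.swap)
  also have "\<dots> = (\<Sum>i\<in>S. (F *\<^sub>v v i) \<bullet>c v i)"
  proof (rule sum.cong[OF refl])
    fix i assume i: "i \<in> S"
    have Fv: "F *\<^sub>v v i \<in> carrier_vec d" using F v[OF i] by simp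
    show "(\<Sum>c<d. \<Sum>r<d. F $$ (c, r) * v i $ r * cnj (v i $ c)) = (F *\<^sub>v v i) \<bullet>c v i"
      unfolding cscalar_prod_sum[OF Fv v[OF i]]
      by (intro sum.cong refl) (simp add: mult_mat_vec_sum[OF F v[OF i]] sum_distrib_right del: index_mult_mat_vec)
  qed
  finally show ?thesis .
qed

lemma eigenvalue_le_lambda_max:
  assumes A: "A \<in> carrier_mat n n" and ev: "eigenvalue A (complex_of_real r)"
  shows "r \<le> lambda_max A"
proof -
  have "{r. eigenvalue A (complex_of_real r)} = complex_of_real -` spectrum A"
    by (auto simp: spectrum_def)
  then have "finite {r. eigenvalue A (complex_of_real r)}"
    using finite_vimageI[OF card_finite_spectrum(1)[OF A] inj_of_real] by simp
  then show ?thesis using ev unfolding lambda_max_def by (simp add: Max_ge)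
qed

(* Jensen's inequality for the concave ln, with the weights |x \<bullet>c ws ! k|^2 / alpha. *)
lemma spectral_mat_ln_cscalar_prod_le:
  assumes on: "orthonormal n ws" and len: "length ws = n" and f: "\<And>k. k < n \<Longrightarrow> 0 < f k"
    and x: "x \<in> carrier_vec n" and xx: "x \<bullet>c x = complex_of_real \<alpha>" and \<alpha>: "0 < \<alpha>"
  shows "Re ((spectral_mat n ws (\<lambda>k. ln (f k)) *\<^sub>v x) \<bullet>c x) / \<alpha>
    \<le> ln (Re ((spectral_mat n ws f *\<^sub>v x) \<bullet>c x) / \<alpha>)"
proof -
  define p where "p k = (cmod (x \<bullet>c ws ! k))\<^sup>2 / \<alpha>" for k
  have "complex_of_real (\<Sum>k<n. 1 * (cmod (x \<bullet>c ws ! k))\<^sup>2) = complex_of_real \<alpha>"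
    using spectral_mat_cscalar_prod[OF on len x, of "\<lambda>k. 1"] x xx by (simp add: spectral_mat_one[OF on len])
  then have p1: "(\<Sum>k<n. p k) = 1"
    using \<alpha> by (simp add: p_def sum_divide_distrib[symmetric] del: of_real_sum)
  then have "{..<n} \<noteq> {}" by auto
  have "(\<Sum>k<n. p k * ln (f k)) \<le> ln (\<Sum>k<n. p k *\<^sub>R f k)"
    by (rule concave_on_sum[OF finite_lessThan \<open>{..<n} \<noteq> {}\<close> ln_concave p1])
      (use f \<alpha> in \<open>auto simp: p_def\<close>)
  then show ?thesis
    using spectral_mat_cscalar_prod[OF on len x] by (simp add: p_def sum_divide_distrib mult_ac)
qed

lemma spectral_mat_ln_one_minus_le:
  assumes on: "orthonormal n ws" and len: "length ws = n" and r: "\<And>k. k < n \<Longrightarrow> \<alpha> * r k < 1"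
    and x: "x \<in> carrier_vec n" and xx: "x \<bullet>c x = complex_of_real \<alpha>" and \<alpha>: "0 < \<alpha>"
  shows "Re ((spectral_mat n ws (\<lambda>k. ln (1 - \<alpha> * r k)) *\<^sub>v x) \<bullet>c x) / \<alpha>
    \<le> ln (1 - Re ((spectral_mat n ws r *\<^sub>v x) \<bullet>c x))"
proof -
  have "complex_of_real (\<Sum>k<n. 1 * (cmod (x \<bullet>c ws ! k))\<^sup>2) = complex_of_real \<alpha>"
    using spectral_mat_cscalar_prod[OF on len x, of "\<lambda>k. 1"] x xx by (simp add: spectral_mat_one[OF on len])
  then have "Re ((spectral_mat n ws (\<lambda>k. 1 - \<alpha> * r k) *\<^sub>v x) \<bullet>c x)
      = \<alpha> - \<alpha> * Re ((spectral_mat n ws r *\<^sub>v x) \<bullet>c x)"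
    by (simp add: spectral_mat_cscalar_prod[OF on len x] left_diff_distrib sum_subtractf
        sum_distrib_left mult.assoc del: of_real_sum)
  then have "Re ((spectral_mat n ws (\<lambda>k. 1 - \<alpha> * r k) *\<^sub>v x) \<bullet>c x) / \<alpha>
      = 1 - Re ((spectral_mat n ws r *\<^sub>v x) \<bullet>c x)"
    using \<alpha> by (simp add: diff_divide_distrib)
  then show ?thesis
    using spectral_mat_ln_cscalar_prod_le[OF on len _ x xx \<alpha>, of "\<lambda>k. 1 - \<alpha> * r k"] r by simp
qed

lemma minv_shift_spectral_mat:
  assumes on: "orthonormal d ws" and len: "length ws = d" and A: "A \<in> carrier_mat d d"
    and eig: "\<And>k. k < d \<Longrightarrow> A *\<^sub>v ws ! k = complex_of_real (a k) \<cdot>\<^sub>v ws ! k"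
    and u: "\<And>k. k < d \<Longrightarrow> a k \<noteq> u"
  shows "minv (complex_of_real u \<cdot>\<^sub>m 1\<^sub>m d - A) = spectral_mat d ws (\<lambda>k. 1 / (u - a k))"
proof -
  have "complex_of_real u \<cdot>\<^sub>m 1\<^sub>m d - A = spectral_mat d ws (\<lambda>k. u - a k)"
    using smult_spectral_mat_minus[of u d ws "\<lambda>k. 1" a] mat_eq_spectral_mat[OF on len A eig]
      spectral_mat_one[OF on len] by simp
  moreover have "u - a k \<noteq> 0" if "k < d" for k using u[OF that] by simp
  ultimately show ?thesis using minv_spectral_mat[OF on len, of "\<lambda>k. u - a k"] by simp
qed

lemma sum_ln_resolvent_ge_trace_log:
  assumes A: "hermitian_mat d A" and \<alpha>: "0 < \<alpha>" and gap: "lambda_max A + \<alpha> < u"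
    and v: "\<And>i. i \<in> B \<Longrightarrow> v i \<in> carrier_vec d" and vv: "\<And>i. i \<in> B \<Longrightarrow> v i \<bullet>c v i = complex_of_real \<alpha>"
  defines "R \<equiv> minv (complex_of_real u \<cdot>\<^sub>m 1\<^sub>m d - A)"
  shows "(1 / \<alpha>) * Re (mtrace (gram_sum d v B * mat_log (1\<^sub>m d - complex_of_real \<alpha> \<cdot>\<^sub>m R)))
    \<le> (\<Sum>i\<in>B. ln (1 - Re ((R *\<^sub>v v i) \<bullet>c v i)))"
proof -
  obtain ws a where on: "orthonormal d ws" and len: "length ws = d"
    and eig: "\<And>k. k < d \<Longrightarrow> A *\<^sub>v ws ! k = complex_of_real (a k) \<cdot>\<^sub>v ws ! k"
    using hermitian_eigenbasis[OF A] by blast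
  note Ac = hermitian_matD(1)[OF A]
  have gap_k: "\<alpha> < u - a k" if k: "k < d" for k
  proof -
    have "ws ! k \<noteq> 0\<^sub>v d" using orthonormalD(2)[OF on, of k k] k len by auto
    then have "eigenvalue A (complex_of_real (a k))"
      unfolding eigenvalue_def eigenvector_def using orthonormalD(1)[OF on] eig k len Ac by auto
    then show ?thesis using eigenvalue_le_lambda_max[OF Ac] gap by fastforce
  qed
  define r where "r k = 1 / (u - a k)" for k
  have r_lt: "\<alpha> * r k < 1" if "k < d" for k
    using gap_k[OF that] \<alpha> by (simp add: r_def field_simps)
  have a_ne: "a k \<noteq> u" if "k < d" for k using gap_k[OF that] \<alpha> by linarith
  have R_eq: "R = spectral_mat d ws r"
    unfolding R_def r_def by (rule minv_shift_spectral_mat[OF on len Ac eig a_ne])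
  have log_eq: "mat_log (1\<^sub>m d - complex_of_real \<alpha> \<cdot>\<^sub>m R) = spectral_mat d ws (\<lambda>k. ln (1 - \<alpha> * r k))"
    unfolding R_eq spectral_mat_one[OF on len, symmetric] spectral_mat_minus_smult
    using r_lt by (simp add: mat_log_spectral_mat[OF on len])
  have "mtrace (gram_sum d v B * spectral_mat d ws (\<lambda>k. ln (1 - \<alpha> * r k)))
      = (\<Sum>i\<in>B. (spectral_mat d ws (\<lambda>k. ln (1 - \<alpha> * r k)) *\<^sub>v v i) \<bullet>c v i)"
    by (rule mtrace_gram_sum_mult[OF spectral_mat_carrier v])
  then have "(1 / \<alpha>) * Re (mtrace (gram_sum d v B * mat_log (1\<^sub>m d - complex_of_real \<alpha> \<cdot>\<^sub>m R)))
      = (\<Sum>i\<in>B. Re ((spectral_mat d ws (\<lambda>k. ln (1 - \<alpha> * r k)) *\<^sub>v v i) \<bullet>c v i) / \<alpha>)"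
    unfolding log_eq by (simp add: Re_sum sum_divide_distrib)
  also have "\<dots> \<le> (\<Sum>i\<in>B. ln (1 - Re ((R *\<^sub>v v i) \<bullet>c v i)))"
    unfolding R_eq
    by (intro sum_mono spectral_mat_ln_one_minus_le[OF on len r_lt v vv \<alpha>])
  finally show ?thesis .
qed

lemma alg1_run_selected:
  assumes "alg1_run d m \<alpha> v sel" and "j \<le> m div 2"
  shows "sel ` {..<j} \<subseteq> {..<m}"
  using assms unfolding alg1_run_def B_seq_def by fastforce

lemma gram_sum_B_seq:
  assumes "gram_sum d v {..<m} = 1\<^sub>m d" and "sel ` {..<j} \<subseteq> {..<m}"
  shows "gram_sum d v (B_seq m sel j) = 1\<^sub>m d - A_seq d v sel j"
  unfolding B_seq_def A_seq_def gram_sum_diff[OF finite_lessThan assms(2)] assms(1) ..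

lemma gram_sum_eq_one_norm_pos:
  assumes d: "0 < d" and gram: "gram_sum d v {..<m} = 1\<^sub>m d"
    and v: "\<forall>i<m. v i \<in> carrier_vec d" and vv: "\<forall>i<m. v i \<bullet>c v i = complex_of_real \<alpha>"
  shows "0 < \<alpha>"
proof (rule ccontr)
  assume "\<not> 0 < \<alpha>"
  then have "v i = 0\<^sub>v d" if "i < m" for i
    using conjugate_square_ge_0_vec[of "v i"] conjugate_square_eq_0_vec[OF v[rule_format, OF that]]
      vv that by (auto simp: less_eq_complex_def)
  then have "gram_sum d v {..<m} $$ (0, 0) = 0" using d by (simp add: gram_sum_def)
  then show False using gram d by simp
qed

theorem lemma3p3:
  fixes d m j :: nat and \<alpha> :: real and v :: "nat \<Rightarrow> complex vec" and sel :: "nat \<Rightarrow> nat"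
  assumes "d > 0"
    and "even m"
    and "\<forall>i<m. v i \<in> carrier_vec d"
    and "gram_sum d v {..<m} = 1\<^sub>m d"
    and "\<forall>i<m. v i \<bullet>c v i = complex_of_real \<alpha>"
    and "\<alpha> \<le> 1 / (221 * real d)"
    and "alg1_run d m \<alpha> v sel"
    and "j < m div 2"
    and "\<forall>j'\<le>j. u_seq d \<alpha> j' - lambda_max (A_seq d v sel j') \<ge> 1/3"
    and "\<forall>j'\<le>j. cond_num (complex_of_real (u_seq d \<alpha> j') \<cdot>\<^sub>m 1\<^sub>m d - A_seq d v sel j') \<le> 3/2"
  shows "(\<Sum>i\<in>B_seq m sel j.
            ln (1 - Re ((minv (complex_of_real (u_seq d \<alpha> (Suc j)) \<cdot>\<^sub>m 1\<^sub>m d - A_seq d v sel j) *\<^sub>v v i) \<bullet>c v i)))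
         \<ge> (1 / \<alpha>) * Re (mtrace ((1\<^sub>m d - A_seq d v sel j) *
              mat_log (1\<^sub>m d - complex_of_real \<alpha> \<cdot>\<^sub>m minv (complex_of_real (u_seq d \<alpha> (Suc j)) \<cdot>\<^sub>m 1\<^sub>m d - A_seq d v sel j))))"
proof -
  have sel: "sel ` {..<j} \<subseteq> {..<m}" using alg1_run_selected assms(7,8) by simp
  have \<alpha>: "0 < \<alpha>" using gram_sum_eq_one_norm_pos assms(1,3,4,5) by blast
  have gap: "lambda_max (A_seq d v sel j) + \<alpha> < u_seq d \<alpha> (Suc j)"
  proof -
    have "u_seq d \<alpha> (Suc j) = u_seq d \<alpha> j + \<alpha> / real d"
      by (simp add: u_seq_def algebra_simps add_divide_distrib)
    moreover have "1 / 3 \<le> u_seq d \<alpha> j - lambda_max (A_seq d v sel j)" using assms(9) by simp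
    moreover have "1 / (221 * real d) \<le> 1 / 221" using assms(1) by (simp add: field_simps)
    moreover have "0 \<le> \<alpha> / real d" using \<alpha> by simp
    ultimately show ?thesis using assms(6) by linarith
  qed
  have B: "i \<in> B_seq m sel j \<Longrightarrow> i < m" for i by (simp add: B_seq_def)
  show ?thesis
    unfolding gram_sum_B_seq[OF assms(4) sel, symmetric]
    by (rule sum_ln_resolvent_ge_trace_log[OF hermitian_gram_sum[of d v "sel ` {..<j}", folded A_seq_def] \<alpha> gap])
      (use B assms(3,5) in auto)
qed

end
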